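(* For $n\ge2$, there is no finite simple graph $G$ with independence number $n$ whose reduced independence polynomial $P=P_G$ satisfies $\frac{5}{2}P(z)+1=T_n\!\left(\frac{5}{2}z+1\right)$ for all $z$.
   Context: For a finite simple graph $G$, the independence polynomial is $I_G(z)=\sum_{i=0}^{\alpha} a_i z^i$, where $a_i$ is the number of sets of $i$ pairwise non-adjacent vertices and the independence number $\alpha$ is the largest such $i$; the reduced independence polynomial is $P_G=I_G-1$. $T_n$ is the Chebyshev polynomial of the first kind of degree $n$: $T_0=1$, $T_1(z)=z$, $T_n(z)=2zT_{n-1}(z)-T_{n-2}(z)$. *)

theory Defs
  imports Complex_Main
begin

definition simple_graph :: "'a set \<Rightarrow> ('a \<Rightarrow> 'a \<Rightarrow> bool) \<Rightarrow> bool" where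
  "simple_graph V E \<longleftrightarrow> finite V \<and> (\<forall>u v. E u v \<longrightarrow> u \<in> V \<and> v \<in> V)
     \<and> (\<forall>u v. E u v \<longrightarrow> E v u) \<and> (\<forall>v. \<not> E v v)"

definition independent_set :: "'a set \<Rightarrow> ('a \<Rightarrow> 'a \<Rightarrow> bool) \<Rightarrow> 'a set \<Rightarrow> bool" where
  "independent_set V E S \<longleftrightarrow> S \<subseteq> V \<and> (\<forall>u\<in>S. \<forall>v\<in>S. \<not> E u v)"

definition indep_count :: "'a set \<Rightarrow> ('a \<Rightarrow> 'a \<Rightarrow> bool) \<Rightarrow> nat \<Rightarrow> nat" where
  "indep_count V E i = card {S. independent_set V E S \<and> card S = i}"

definition independence_number :: "'a set \<Rightarrow> ('a \<Rightarrow> 'a \<Rightarrow> bool) \<Rightarrow> nat" where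
  "independence_number V E = Max (card ` {S. independent_set V E S})"

definition indep_poly :: "'a set \<Rightarrow> ('a \<Rightarrow> 'a \<Rightarrow> bool) \<Rightarrow> complex \<Rightarrow> complex" where
  "indep_poly V E z = (\<Sum>i = 0..independence_number V E. of_nat (indep_count V E i) * z ^ i)"

definition reduced_indep_poly :: "'a set \<Rightarrow> ('a \<Rightarrow> 'a \<Rightarrow> bool) \<Rightarrow> complex \<Rightarrow> complex" where
  "reduced_indep_poly V E z = indep_poly V E z - 1"

fun chebyshev_T :: "nat \<Rightarrow> complex \<Rightarrow> complex" where
  "chebyshev_T 0 z = 1"
| "chebyshev_T (Suc 0) z = z"
| "chebyshev_T (Suc (Suc n)) z = 2 * z * chebyshev_T (Suc n) z - chebyshev_T n z"

end

theory Submission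
  imports Defs "HOL-Computational_Algebra.Polynomial"
begin

(* Compare the coefficients of z, z^2 and z^3.  Since
     T_n(1 + w) = 1 + n^2 w + n^2(n^2 - 1)/6 w^2 + n^2(n^2 - 1)(n^2 - 4)/90 w^3 + ...,
   the graph would have N = n^2 vertices, a_2 = 5N(N - 1)/12 independent pairs and
   a_3 = 5N(N - 1)(N - 4)/72 independent triples.  But every non-independent triple arises from
   a non-independent pair by adding one of the other N - 2 vertices, so
   C(N,3) - a_3 <= (C(N,2) - a_2)(N - 2), while the values above make the left-hand side exceed
   the right-hand side by N(N - 1)(N + 8)/72. *)

fun chebyshev_shift_poly :: "nat \<Rightarrow> 'a::comm_ring_1 poly" where
  "chebyshev_shift_poly 0 = 1"
| "chebyshev_shift_poly (Suc 0) = [:1, 1:]"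
| "chebyshev_shift_poly (Suc (Suc n)) =
     smult 2 ([:1, 1:] * chebyshev_shift_poly (Suc n)) - chebyshev_shift_poly n"

lemma poly_chebyshev_shift_poly: "poly (chebyshev_shift_poly n) w = chebyshev_T n (1 + w)"
  by (induction n rule: chebyshev_shift_poly.induct) (simp_all add: algebra_simps)

declare chebyshev_shift_poly.simps(3) [simp del]

lemma coeff_chebyshev_shift_poly_Suc_Suc:
  assumes "k > 0"
  shows "coeff (chebyshev_shift_poly (Suc (Suc n)) :: 'a::comm_ring_1 poly) k =
     2 * (coeff (chebyshev_shift_poly (Suc n)) k + coeff (chebyshev_shift_poly (Suc n)) (k - 1))
     - coeff (chebyshev_shift_poly n) k"
  using assms by (cases k) (simp_all add: chebyshev_shift_poly.simps(3) mult_pCons_left)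

lemma coeff_chebyshev_shift_poly_0: "coeff (chebyshev_shift_poly n) 0 = 1"
  by (induction n rule: chebyshev_shift_poly.induct)
    (simp_all add: chebyshev_shift_poly.simps(3) mult_pCons_left)

lemma coeff_chebyshev_shift_poly_1:
  "coeff (chebyshev_shift_poly n :: 'a::comm_ring_1 poly) 1 = of_nat n ^ 2"
proof (induction n rule: chebyshev_shift_poly.induct)
  case (3 n)
  let ?c = "\<lambda>m k. coeff (chebyshev_shift_poly m :: 'a poly) k"
  define x :: 'a where "x = of_nat n"
  have "?c (Suc (Suc n)) 1 = 2 * (?c (Suc n) 1 + 1) - ?c n 1"
    by (simp add: coeff_chebyshev_shift_poly_Suc_Suc coeff_chebyshev_shift_poly_0)
  also have "\<dots> = 2 * ((x + 1) ^ 2 + 1) - x ^ 2"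
    using 3 by (simp add: x_def add.commute)
  also have "\<dots> = (x + 2) ^ 2"
    by (simp add: algebra_simps power2_eq_square)
  finally show ?case
    by (simp add: x_def add.commute)
qed simp_all

lemma coeff_chebyshev_shift_poly_2:
  "6 * coeff (chebyshev_shift_poly n :: 'a::comm_ring_1 poly) 2 = of_nat n ^ 2 * (of_nat n ^ 2 - 1)"
proof (induction n rule: chebyshev_shift_poly.induct)
  case (3 n)
  let ?c = "\<lambda>m k. coeff (chebyshev_shift_poly m :: 'a poly) k"
  define x :: 'a where "x = of_nat n"
  have "6 * ?c (Suc (Suc n)) 2 = 2 * (6 * ?c (Suc n) 2 + 6 * ?c (Suc n) 1) - 6 * ?c n 2"
    by (simp add: coeff_chebyshev_shift_poly_Suc_Suc algebra_simps)
  also have "\<dots> = 2 * ((x + 1) ^ 2 * ((x + 1) ^ 2 - 1) + 6 * (x + 1) ^ 2) - x ^ 2 * (x ^ 2 - 1)"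
    using 3 coeff_chebyshev_shift_poly_1[of "Suc n", where 'a='a] by (simp add: x_def add.commute)
  also have "\<dots> = (x + 2) ^ 2 * ((x + 2) ^ 2 - 1)"
    by (simp add: algebra_simps power2_eq_square)
  finally show ?case
    by (simp add: x_def add.commute)
qed (simp_all add: numeral_eq_Suc)

lemma coeff_chebyshev_shift_poly_3:
  "90 * coeff (chebyshev_shift_poly n :: 'a::comm_ring_1 poly) 3 =
     of_nat n ^ 2 * (of_nat n ^ 2 - 1) * (of_nat n ^ 2 - 4)"
proof (induction n rule: chebyshev_shift_poly.induct)
  case (3 n)
  let ?c = "\<lambda>m k. coeff (chebyshev_shift_poly m :: 'a poly) k"
  define x :: 'a where "x = of_nat n"
  have "90 * ?c (Suc (Suc n)) 3 = 2 * (90 * ?c (Suc n) 3 + 15 * (6 * ?c (Suc n) 2)) - 90 * ?c n 3"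
    by (simp add: coeff_chebyshev_shift_poly_Suc_Suc algebra_simps)
  also have "\<dots> = 2 * ((x + 1) ^ 2 * ((x + 1) ^ 2 - 1) * ((x + 1) ^ 2 - 4)
                       + 15 * ((x + 1) ^ 2 * ((x + 1) ^ 2 - 1)))
                  - x ^ 2 * (x ^ 2 - 1) * (x ^ 2 - 4)"
    using 3 coeff_chebyshev_shift_poly_2[of "Suc n", where 'a='a] by (simp add: x_def add.commute)
  also have "\<dots> = (x + 2) ^ 2 * ((x + 2) ^ 2 - 1) * ((x + 2) ^ 2 - 4)"
    by (simp add: algebra_simps power2_eq_square)
  finally show ?case
    by (simp add: x_def add.commute)
qed (simp_all add: numeral_eq_Suc)

lemma finite_independent_sets:
  "simple_graph V E \<Longrightarrow> finite {S. independent_set V E S}"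
  unfolding simple_graph_def independent_set_def
  by (rule finite_subset[of _ "Pow V"]) auto

lemma indep_count_eq_0:
  assumes "simple_graph V E" and "independence_number V E < k"
  shows "indep_count V E k = 0"
proof -
  have "card S \<le> independence_number V E" if "independent_set V E S" for S
    unfolding independence_number_def
    using that finite_independent_sets[OF assms(1)] by (intro Max_ge) auto
  with assms(2) have "{S. independent_set V E S \<and> card S = k} = {}"
    by fastforce
  then show ?thesis
    unfolding indep_count_def by (simp only: card.empty)
qed

lemma indep_count_1:
  assumes "simple_graph V E"
  shows "indep_count V E 1 = card V"
proof -
  have "{S. independent_set V E S \<and> card S = 1} = (\<lambda>v. {v}) ` V"
    using assms unfolding simple_graph_def independent_set_def
    by (auto simp: card_1_singleton_iff)
  then show ?thesis
    unfolding indep_count_def by (simp add: card_image)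
qed

definition indep_polynomial :: "'a set \<Rightarrow> ('a \<Rightarrow> 'a \<Rightarrow> bool) \<Rightarrow> complex poly" where
  "indep_polynomial V E = (\<Sum>i = 0..independence_number V E. monom (of_nat (indep_count V E i)) i)"

lemma poly_indep_polynomial: "poly (indep_polynomial V E) = indep_poly V E"
  unfolding indep_polynomial_def indep_poly_def by (simp add: poly_sum poly_monom fun_eq_iff)

lemma coeff_indep_polynomial:
  assumes "simple_graph V E"
  shows "coeff (indep_polynomial V E) k = of_nat (indep_count V E k)"
  using indep_count_eq_0[OF assms, of k]
  unfolding indep_polynomial_def by (simp add: coeff_sum coeff_monom not_le)

definition dependent_sets :: "'a set \<Rightarrow> ('a \<Rightarrow> 'a \<Rightarrow> bool) \<Rightarrow> nat \<Rightarrow> 'a set set" where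
  "dependent_sets V E k = {S. S \<subseteq> V \<and> card S = k \<and> \<not> independent_set V E S}"

lemma indep_count_add_card_dependent_sets:
  assumes "simple_graph V E"
  shows "indep_count V E k + card (dependent_sets V E k) = card V choose k"
proof -
  have "finite V"
    using assms unfolding simple_graph_def by simp
  let ?I = "{S. independent_set V E S \<and> card S = k}"
  have "{S. S \<subseteq> V \<and> card S = k} = ?I \<union> dependent_sets V E k"
    unfolding dependent_sets_def independent_set_def by blast
  moreover have "finite {S. S \<subseteq> V \<and> card S = k}"
    by (rule finite_subset[of _ "Pow V"]) (auto simp: \<open>finite V\<close>)
  ultimately have "card ?I + card (dependent_sets V E k) = card {S. S \<subseteq> V \<and> card S = k}"
    by (subst card_Un_disjoint[symmetric]) (auto simp: dependent_sets_def)
  then show ?thesis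
    unfolding indep_count_def n_subsets[OF \<open>finite V\<close>] .
qed

lemma card_dependent_sets_Suc_le:
  assumes "simple_graph V E" and "2 \<le> k"
  shows "card (dependent_sets V E (Suc k)) \<le> card (dependent_sets V E k) * (card V - k)"
proof -
  have "finite V"
    using assms(1) unfolding simple_graph_def by simp
  have "finite (dependent_sets V E k)"
    unfolding dependent_sets_def by (rule finite_subset[of _ "Pow V"]) (auto simp: \<open>finite V\<close>)
  have cover:
    "dependent_sets V E (Suc k) \<subseteq> (\<Union>T\<in>dependent_sets V E k. (\<lambda>w. insert w T) ` (V - T))"
  proof
    fix S
    assume "S \<in> dependent_sets V E (Suc k)"
    then have S: "S \<subseteq> V" "card S = Suc k" and "\<not> independent_set V E S"
      unfolding dependent_sets_def by auto
    then obtain u v where uv: "u \<in> S" "v \<in> S" "E u v"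
      unfolding independent_set_def by auto
    have "card {u, v} \<le> 2"
      by (cases "u = v") auto
    then have "\<not> S \<subseteq> {u, v}"
      using S(2) assms(2) card_mono[of "{u, v}" S] by auto
    then obtain w where w: "w \<in> S" "w \<noteq> u" "w \<noteq> v"
      by blast
    have "finite S"
      using S(1) \<open>finite V\<close> by (rule finite_subset)
    have "S - {w} \<in> dependent_sets V E k"
      using S uv w \<open>finite S\<close> unfolding dependent_sets_def independent_set_def by auto
    moreover have "S = insert w (S - {w})" and "w \<in> V - (S - {w})"
      using w S(1) by auto
    ultimately show "S \<in> (\<Union>T\<in>dependent_sets V E k. (\<lambda>w. insert w T) ` (V - T))"
      by blast
  qed
  have "card (dependent_sets V E (Suc k))
          \<le> card (\<Union>T\<in>dependent_sets V E k. (\<lambda>w. insert w T) ` (V - T))"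
    using cover
    by (rule card_mono[rotated]) (simp add: \<open>finite V\<close> \<open>finite (dependent_sets V E k)\<close>)
  also have "\<dots> \<le> (\<Sum>T\<in>dependent_sets V E k. card ((\<lambda>w. insert w T) ` (V - T)))"
    by (rule card_UN_le[OF \<open>finite (dependent_sets V E k)\<close>])
  also have "\<dots> \<le> (\<Sum>T\<in>dependent_sets V E k. card V - k)"
  proof (rule sum_mono)
    fix T
    assume "T \<in> dependent_sets V E k"
    then have "card (V - T) = card V - k"
      unfolding dependent_sets_def using \<open>finite V\<close> by (auto simp: card_Diff_subset finite_subset)
    then show "card ((\<lambda>w. insert w T) ` (V - T)) \<le> card V - k"
      using card_image_le[of "V - T" "\<lambda>w. insert w T"] \<open>finite V\<close> by simp
  qed
  finally show ?thesis
    by simp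
qed

lemma indep_count_Suc_lower_bound:
  assumes "simple_graph V E" and "2 \<le> k"
  shows "(card V choose Suc k) + indep_count V E k * (card V - k)
           \<le> indep_count V E (Suc k) + (card V choose k) * (card V - k)"
proof -
  let ?m = "card V - k"
  have "(card V choose k) * ?m = indep_count V E k * ?m + card (dependent_sets V E k) * ?m"
    using indep_count_add_card_dependent_sets[OF assms(1), of k] by (metis add_mult_distrib)
  then show ?thesis
    using indep_count_add_card_dependent_sets[OF assms(1), of "Suc k"]
      card_dependent_sets_Suc_le[OF assms]
    by linarith
qed

lemma indep_count_eq_chebyshev_coeff:
  assumes "simple_graph V E"
    and "\<And>z. c * reduced_indep_poly V E z + 1 = chebyshev_T n (c * z + 1)"
    and "0 < k"
  shows "c * of_nat (indep_count V E k) = c ^ k * coeff (chebyshev_shift_poly n) k"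
proof -
  have "poly (smult c (indep_polynomial V E - 1) + 1) = poly (chebyshev_shift_poly n \<circ>\<^sub>p [:0, c:])"
    using assms(2)
    by (simp add: fun_eq_iff poly_pcompose poly_indep_polynomial poly_chebyshev_shift_poly
        reduced_indep_poly_def add.commute mult.commute)
  then have "smult c (indep_polynomial V E - 1) + 1 = chebyshev_shift_poly n \<circ>\<^sub>p [:0, c:]"
    by (simp only: poly_eq_poly_eq_iff)
  from arg_cong[where f = "\<lambda>p. coeff p k", OF this] show ?thesis
    using assms(3) by (simp add: coeff_indep_polynomial[OF assms(1)] coeff_pcompose_linear coeff_1)
qed

lemma chebyshev_counts_violate_triple_bound:
  fixes N a2 a3 :: nat
  assumes "3 \<le> N"
    and "12 * real a2 = 5 * real N * (real N - 1)"
    and "72 * real a3 = 5 * real N * (real N - 1) * (real N - 4)"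
  shows "a3 + (N choose 2) * (N - 2) < (N choose 3) + a2 * (N - 2)"
proof -
  define x where "x = real N"
  have C: "real (N choose 2) = x * (x - 1) / 2" "real (N choose 3) = x * (x - 1) * (x - 2) / 6"
    using assms(1)
    by (simp_all add: x_def binomial_altdef_of_nat numeral_3_eq_3 numeral_2_eq_2 of_nat_diff)
  have A: "real a2 = 5 * x * (x - 1) / 12" "real a3 = 5 * x * (x - 1) * (x - 4) / 72"
    using assms(2,3) by (simp_all add: x_def field_simps)
  have "0 < x * (x - 1) * (x + 8)"
    using assms(1) by (simp add: x_def)
  moreover have "(x * (x - 1) * (x - 2) / 6 + 5 * x * (x - 1) / 12 * (x - 2))
      - (5 * x * (x - 1) * (x - 4) / 72 + x * (x - 1) / 2 * (x - 2)) = x * (x - 1) * (x + 8) / 72"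
    by (simp add: field_simps)
  ultimately have "real (a3 + (N choose 2) * (N - 2)) < real ((N choose 3) + a2 * (N - 2))"
    using assms(1) by (simp add: C A x_def[symmetric] of_nat_diff)
  then show ?thesis
    by (simp only: of_nat_less_iff)
qed

theorem lemma3p8:
  fixes n :: nat
  assumes "n \<ge> 2"
  shows "\<not> (\<exists>(V :: nat set) E. simple_graph V E \<and> independence_number V E = n \<and>
            (\<forall>z::complex. 5/2 * reduced_indep_poly V E z + 1 = chebyshev_T n (5/2 * z + 1)))"
proof
  assume "\<exists>(V :: nat set) E. simple_graph V E \<and> independence_number V E = n \<and>
            (\<forall>z::complex. 5/2 * reduced_indep_poly V E z + 1 = chebyshev_T n (5/2 * z + 1))"
  then obtain V :: "nat set" and E where G: "simple_graph V E"
    and T: "\<And>z. 5/2 * reduced_indep_poly V E z + 1 = chebyshev_T n (5/2 * z + 1)"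
    by blast
  note coeff = indep_count_eq_chebyshev_coeff[OF G T]
  define N where "N = n ^ 2"
  have "3 \<le> N"
    using power_mono[OF assms, of 2] by (simp add: N_def)
  have "of_nat (card V) = (of_nat N :: complex)"
    using coeff[of 1] coeff_chebyshev_shift_poly_1[of n, where 'a=complex] indep_count_1[OF G]
    by (simp add: N_def)
  then have "card V = N"
    by (simp only: of_nat_eq_iff)
  have "complex_of_real (12 * real (indep_count V E 2)) = of_real (5 * real N * (real N - 1))"
    using coeff[of 2] coeff_chebyshev_shift_poly_2[of n, where 'a=complex] unfolding N_def by simp algebra
  then have a2: "12 * real (indep_count V E 2) = 5 * real N * (real N - 1)"
    by (simp only: of_real_eq_iff)
  have "complex_of_real (72 * real (indep_count V E 3))
          = of_real (5 * real N * (real N - 1) * (real N - 4))"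
    using coeff[of 3] coeff_chebyshev_shift_poly_3[of n, where 'a=complex] unfolding N_def by simp algebra
  then have a3: "72 * real (indep_count V E 3) = 5 * real N * (real N - 1) * (real N - 4)"
    by (simp only: of_real_eq_iff)
  show False
    using indep_count_Suc_lower_bound[OF G, of 2]
      chebyshev_counts_violate_triple_bound[OF \<open>3 \<le> N\<close> a2 a3]
    by (simp add: \<open>card V = N\<close> numeral_3_eq_3)
qed

end
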